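(* Let $D \subset \mathbb{Z}^m \setminus \{\mathbf{0}\}$ be finite with $D = -D$, and let $F_D$ be the set of Laurent polynomials $f(z) = \sum_{d \in D} c_d z_1^{d_1}\cdots z_m^{d_m}$ with $c_{-d} = \overline{c_d}$ for all $d \in D$ and $\sum_{d \in D} |c_d|^2 = 1$, topologized via the coefficient vector $(c_d)_{d \in D}$. Then the function $f \mapsto \rho_-(f)$ is continuous on $F_D$.
   Context: $\lambda_m$ is the normalized Lebesgue measure on $\mathbb{T}^m$ ($\mathbb{T}$ the unit circle), with $\lambda_m(\mathbb{T}^m)=1$; such $f$ are real-valued on $\mathbb{T}^m$, and $\rho_-(f) = \lambda_m(\{z \in \mathbb{T}^m : f(z) < 0\})$. *)

theory Defs
  imports "HOL-Analysis.Analysis"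
begin

definition laurent_eval :: "(int^'m) set \<Rightarrow> (int^'m \<Rightarrow> complex) \<Rightarrow> complex^'m \<Rightarrow> complex" where
  "laurent_eval D c z = (\<Sum>d\<in>D. c d * (\<Prod>j\<in>UNIV. (z$j) powi (d$j)))"

definition torus_measure :: "(complex^'m) measure" where
  "torus_measure = distr (restrict_space lborel {t::real^'m. \<forall>j. t$j \<in> {0..1}})
       borel (\<lambda>t. \<chi> j. cis (2 * pi * t$j))"

text \<open>The set F_D of admissible coefficient vectors (coefficients outside D are 0,
  so the product topology on functions restricts to the topology of C^D).\<close>
definition F_D :: "(int^'m) set \<Rightarrow> (int^'m \<Rightarrow> complex) set" where
  "F_D D = {c. (\<forall>d. d \<notin> D \<longrightarrow> c d = 0) \<and> (\<forall>d\<in>D. c (- d) = cnj (c d))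
              \<and> (\<Sum>d\<in>D. (cmod (c d))^2) = 1}"

definition rho_neg :: "(int^'m) set \<Rightarrow> (int^'m \<Rightarrow> complex) \<Rightarrow> real" where
  "rho_neg D c = measure torus_measure
     {z \<in> space torus_measure. Re (laurent_eval D c z) < 0}"

end

theory Submission
  imports Defs "HOL-Computational_Algebra.Polynomial"
begin

text \<open>If g is uniformly within
  delta of f, the sets where f and g are negative differ only inside {|f| < delta}, whose
  measure tends to that of the zero set of f as delta \<rightarrow> 0. So it suffices that a nonzero
  trigonometric polynomial vanishes only on a null set. Choose an integer vector k on which the
  frequencies d \<in> D take distinct values k \<cdot> d. Along every line t + s k the polynomial is a
  Laurent polynomial in e^{2 pi i s} with distinct exponents, hence has finitely many zeros with
  s \<in> [0,1), and by Tonelli the zero set is null.\<close>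

lemma (in finite_measure) measure_neg_set_diff_le:
  fixes f g :: "'a \<Rightarrow> real"
  assumes [measurable]: "f \<in> borel_measurable M" "g \<in> borel_measurable M"
    and close: "\<And>x. x \<in> space M \<Longrightarrow> \<bar>g x - f x\<bar> < \<delta>"
  shows "\<bar>measure M {x\<in>space M. g x < 0} - measure M {x\<in>space M. f x < 0}\<bar>
    \<le> measure M {x\<in>space M. \<bar>f x\<bar> < \<delta>}"
proof -
  have subadd: "measure M A \<le> measure M B + measure M C"
    if "A \<subseteq> B \<union> C" "B \<in> sets M" "C \<in> sets M" for A B C
    using finite_measure_mono[OF that(1) sets.Un[OF that(2,3)]] measure_Un_le[OF that(2,3)] by linarith
  have "measure M {x\<in>space M. g x < 0}
      \<le> measure M {x\<in>space M. f x < 0} + measure M {x\<in>space M. \<bar>f x\<bar> < \<delta>}"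
    using close by (intro subadd) (fastforce, measurable)
  moreover have "measure M {x\<in>space M. f x < 0}
      \<le> measure M {x\<in>space M. g x < 0} + measure M {x\<in>space M. \<bar>f x\<bar> < \<delta>}"
    using close by (intro subadd) (fastforce, measurable)
  ultimately show ?thesis
    by linarith
qed

lemma (in finite_measure) tendsto_measure_neg_set:
  fixes f :: "'a \<Rightarrow> real" and g :: "'b \<Rightarrow> 'a \<Rightarrow> real"
  assumes [measurable]: "f \<in> borel_measurable M" "\<And>y. g y \<in> borel_measurable M"
    and "uniform_limit (space M) g f F"
    and "{x\<in>space M. f x = 0} \<in> null_sets M"
  shows "((\<lambda>y. measure M {x\<in>space M. g y x < 0}) \<longlongrightarrow> measure M {x\<in>space M. f x < 0}) F"
proof (rule tendstoI)
  fix e :: real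
  assume "0 < e"
  define N where "N n = {x\<in>space M. \<bar>f x\<bar> < 1 / Suc n}" for n
  have N_sets: "N n \<in> sets M" for n
    unfolding N_def by measurable
  have "decseq N"
  proof (intro decseq_SucI subsetI)
    fix n x
    assume "x \<in> N (Suc n)"
    moreover have "1 / real (Suc (Suc n)) \<le> 1 / real (Suc n)"
      by (simp add: frac_le)
    ultimately show "x \<in> N n"
      unfolding N_def by simp
  qed
  then have "(\<lambda>n. measure M (N n)) \<longlonglongrightarrow> measure M (\<Inter>n. N n)"
    using N_sets by (intro finite_Lim_measure_decseq) auto
  moreover have "(\<Inter>n. N n) = {x\<in>space M. f x = 0}"
  proof (intro equalityI subsetI)
    fix x
    assume x: "x \<in> (\<Inter>n. N n)"
    then have "\<bar>f x\<bar> < 1 / Suc n" for n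
      by (auto simp: N_def)
    then have "\<not> 0 < \<bar>f x\<bar>"
      by (metis nat_approx_posE order.asym)
    with x show "x \<in> {x\<in>space M. f x = 0}"
      by (auto simp: N_def)
  qed (auto simp: N_def)
  moreover have "measure M {x\<in>space M. f x = 0} = 0"
    using assms(4) by (simp add: measure_def null_setsD1)
  ultimately have "(\<lambda>n. measure M (N n)) \<longlonglongrightarrow> 0"
    by simp
  from order_tendstoD(2)[OF this \<open>0 < e\<close>] obtain n where n: "measure M (N n) < e"
    by (auto simp: eventually_sequentially)
  have "\<forall>\<^sub>F y in F. \<forall>x\<in>space M. dist (g y x) (f x) < 1 / Suc n"
    using assms(3) by (rule uniform_limitD) simp
  then show "\<forall>\<^sub>F y in F.
      dist (measure M {x\<in>space M. g y x < 0}) (measure M {x\<in>space M. f x < 0}) < e"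
  proof eventually_elim
    case (elim y)
    then have "\<bar>measure M {x\<in>space M. g y x < 0} - measure M {x\<in>space M. f x < 0}\<bar>
        \<le> measure M (N n)"
      unfolding N_def by (intro measure_neg_set_diff_le) (auto simp: dist_real_def)
    with n show ?case
      by (simp add: dist_real_def)
  qed
qed

lemma null_sets_lborel_of_null_line_sections:
  fixes Z :: "'a::euclidean_space set" and v :: 'a
  assumes "Z \<in> sets borel" and "\<And>t. {s\<in>{0..<1}. t + s *\<^sub>R v \<in> Z} \<in> null_sets lborel"
  shows "Z \<in> null_sets lborel"
proof -
  define W where "W = {p :: real \<times> 'a. fst p \<in> {0..<1} \<and> snd p + fst p *\<^sub>R v \<in> Z}"
  have "W = (\<lambda>p. (fst p, snd p + fst p *\<^sub>R v)) -` ({0..<1} \<times> Z) \<inter> space borel"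
    by (auto simp: W_def)
  also have "\<dots> \<in> sets borel"
    using assms(1)
    by (intro measurable_sets[where A = borel] borel_measurable_continuous_onI continuous_intros)
      (simp add: borel_prod[symmetric])
  finally have "W \<in> sets (lborel \<Otimes>\<^sub>M lborel)"
    unfolding lborel_prod by simp
  then have "emeasure (lborel \<Otimes>\<^sub>M lborel) W
        = (\<integral>\<^sup>+ s. emeasure lborel (Pair s -` W) \<partial>lborel)"
    and "emeasure (lborel \<Otimes>\<^sub>M lborel) W
        = (\<integral>\<^sup>+ t. emeasure lborel ((\<lambda>s. (s, t)) -` W) \<partial>lborel)"
    by (rule lborel.emeasure_pair_measure_alt, rule lborel_pair.emeasure_pair_measure_alt2)
  moreover have "emeasure lborel (Pair s -` W) = emeasure lborel Z * indicator {0..<1} s" for s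
  proof -
    have "emeasure lborel {t. t + s *\<^sub>R v \<in> Z} = emeasure lborel Z"
      using emeasure_distr[of "(+) (s *\<^sub>R v)" lborel borel Z] assms(1)
      by (simp add: lborel_distr_plus vimage_def add.commute)
    then show ?thesis
      by (cases "s \<in> {0..<1}") (auto simp: W_def)
  qed
  moreover have "emeasure lborel ((\<lambda>s. (s, t)) -` W) = 0" for t
    using null_setsD1[OF assms(2)[of t]] by (simp add: W_def)
  ultimately show ?thesis
    using assms(1) by (simp add: nn_integral_cmult_indicator null_sets_def)
qed

lemma finite_nonzero_roots_Laurent:
  fixes a :: "'a \<Rightarrow> 'b::field" and n :: "'a \<Rightarrow> int"
  assumes "finite D" and "inj_on n D" and "d0 \<in> D" and "a d0 \<noteq> 0"
  shows "finite {w. w \<noteq> 0 \<and> (\<Sum>d\<in>D. a d * w powi n d) = 0}"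
proof -
  define N where "N = (\<Sum>d\<in>D. \<bar>n d\<bar>)"
  have shifted_nonneg: "0 \<le> n d + N" if "d \<in> D" for d
    using member_le_sum[of d D "\<lambda>d. \<bar>n d\<bar>"] \<open>finite D\<close> that by (simp add: N_def)
  define p where "p = (\<Sum>d\<in>D. monom (a d) (nat (n d + N)))"
  have "coeff p (nat (n d0 + N)) = (\<Sum>d\<in>D. if d = d0 then a d0 else 0)"
    unfolding p_def coeff_sum coeff_monom
    using assms(2,3) shifted_nonneg by (intro sum.cong) (auto simp: inj_on_def eq_nat_nat_iff)
  then have "p \<noteq> 0"
    using assms by auto
  then have "finite {w. poly p w = 0}"
    by (rule poly_roots_finite)
  moreover have "poly p w = w powi N * (\<Sum>d\<in>D. a d * w powi n d)" if "w \<noteq> 0" for w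
  proof -
    have "poly p w = (\<Sum>d\<in>D. a d * w powi (n d + N))"
      unfolding p_def poly_sum poly_monom
      by (intro sum.cong refl) (simp add: power_int_def shifted_nonneg)
    also have "\<dots> = w powi N * (\<Sum>d\<in>D. a d * w powi n d)"
      using \<open>w \<noteq> 0\<close> by (simp add: power_int_add sum_distrib_left ac_simps)
    finally show ?thesis .
  qed
  ultimately show ?thesis
    by (auto elim!: finite_subset[rotated])
qed

lemma inj_on_cis_2pi: "inj_on (\<lambda>s. cis (2 * pi * s)) {0..<1}"
proof (rule inj_onI)
  fix a b :: real
  assume "a \<in> {0..<1}" "b \<in> {0..<1}" and "cis (2 * pi * a) = cis (2 * pi * b)"
  then have "cos (2 * pi * (a - b)) = 1"
    using arg_cong[OF cis_divide[of "2 * pi * a" "2 * pi * b"], of Re] by (simp add: algebra_simps)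
  then obtain n :: int where "2 * pi * (a - b) = n * 2 * pi"
    by (auto simp: cos_one_2pi_int)
  then have "a - b = n"
    by simp
  with \<open>a \<in> {0..<1}\<close> \<open>b \<in> {0..<1}\<close> show "a = b"
    by (smt (verit, best) atLeastLessThan_iff of_int_eq_0_iff of_int_less_1_iff of_int_minus)
qed

lemma prod_cis: "(\<Prod>j\<in>A. cis (f j)) = cis (\<Sum>j\<in>A. f j)"
  by (induction A rule: infinite_finite_induct) (auto simp: cis_mult)

lemma ex_inj_on_int_linear_form:
  fixes D :: "(int^'m) set"
  assumes "finite D"
  shows "\<exists>k::int^'m. inj_on (\<lambda>d. \<Sum>j\<in>UNIV. k$j * d$j) D"
proof -
  define \<sigma> where "\<sigma> = to_nat_on (UNIV :: 'm set)"
  have "inj \<sigma>"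
    unfolding \<sigma>_def by (rule inj_on_to_nat_on) simp
  define q where "q v = (\<Sum>j\<in>UNIV. monom (v$j) (\<sigma> j))" for v :: "int^'m"
  have poly_q: "poly (q v) x = (\<Sum>j\<in>UNIV. v$j * x ^ \<sigma> j)" for v x
    unfolding q_def poly_sum poly_monom by simp
  have q_nonzero: "q v \<noteq> 0" if v: "v \<noteq> 0" for v
  proof -
    obtain i where "v$i \<noteq> 0"
      using v by (metis vec_eq_iff zero_index)
    moreover have "coeff (q v) (\<sigma> i) = v$i"
      unfolding q_def coeff_sum coeff_monom using \<open>inj \<sigma>\<close> by (simp add: inj_eq)
    ultimately show ?thesis
      by auto
  qed
  define V where "V = (\<lambda>(d, d'). d - d') ` (D \<times> D) - {0}"
  have "finite (\<Union>v\<in>V. {x. poly (q v) x = 0})"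
    using \<open>finite D\<close> q_nonzero by (auto simp: V_def intro!: poly_roots_finite)
  then obtain x :: int where x: "x \<notin> (\<Union>v\<in>V. {x. poly (q v) x = 0})"
    using ex_new_if_finite[OF infinite_UNIV_int] by blast
  define k :: "int^'m" where "k = (\<chi> j. x ^ \<sigma> j)"
  have "inj_on (\<lambda>d. \<Sum>j\<in>UNIV. k$j * d$j) D"
  proof (rule inj_onI, rule ccontr)
    fix d d'
    assume "d \<in> D" "d' \<in> D" "d \<noteq> d'"
      and "(\<Sum>j\<in>UNIV. k$j * d$j) = (\<Sum>j\<in>UNIV. k$j * d'$j)"
    then have "poly (q (d - d')) x = 0"
      by (simp add: poly_q k_def algebra_simps sum_subtractf)
    moreover have "d - d' \<in> V"
      using \<open>d \<in> D\<close> \<open>d' \<in> D\<close> \<open>d \<noteq> d'\<close> by (force simp: V_def)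
    ultimately show False
      using x by blast
  qed
  then show ?thesis
    by blast
qed

definition of_int_vec :: "int^'m \<Rightarrow> real^'m" where
  "of_int_vec d = (\<chi> j. of_int (d$j))"

definition trig_poly ::
    "(int^'m) set \<Rightarrow> (int^'m \<Rightarrow> complex) \<Rightarrow> real^'m \<Rightarrow> complex" where
  "trig_poly D c t = (\<Sum>d\<in>D. c d * cis (2 * pi * (of_int_vec d \<bullet> t)))"

lemma continuous_on_trig_poly: "continuous_on A (trig_poly D c)"
  unfolding trig_poly_def by (intro continuous_intros)

lemma borel_measurable_trig_poly [measurable]: "trig_poly D c \<in> borel_measurable borel"
  by (intro borel_measurable_continuous_onI continuous_on_trig_poly)

lemma laurent_eval_cis: "laurent_eval D c (\<chi> j. cis (2 * pi * t$j)) = trig_poly D c t"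
  unfolding laurent_eval_def trig_poly_def
  by (simp add: cis_power_int prod_cis inner_vec_def of_int_vec_def sum_distrib_left ac_simps)

lemma Im_trig_poly:
  assumes "uminus ` D = D" and "\<And>d. d \<in> D \<Longrightarrow> c (- d) = cnj (c d)"
  shows "Im (trig_poly D c t) = 0"
proof -
  have "cnj (trig_poly D c t) = (\<Sum>d\<in>D. c (- d) * cis (2 * pi * (of_int_vec (- d) \<bullet> t)))"
    unfolding trig_poly_def cnj_sum
    by (intro sum.cong) (auto simp: assms(2) cis_cnj of_int_vec_def inner_vec_def sum_negf)
  also have "\<dots> = (\<Sum>d\<in>uminus ` D. c d * cis (2 * pi * (of_int_vec d \<bullet> t)))"
    by (subst sum.reindex) (auto simp: inj_on_def)
  also have "\<dots> = trig_poly D c t"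
    by (simp add: assms(1) trig_poly_def)
  finally show ?thesis
    using Reals_cnj_iff complex_is_Real_iff by blast
qed

lemma norm_trig_poly_diff_le:
  "norm (trig_poly D c t - trig_poly D c' t) \<le> (\<Sum>d\<in>D. norm (c d - c' d))"
proof -
  have "trig_poly D c t - trig_poly D c' t
      = (\<Sum>d\<in>D. (c d - c' d) * cis (2 * pi * (of_int_vec d \<bullet> t)))"
    unfolding trig_poly_def by (simp add: sum_subtractf[symmetric] algebra_simps)
  also have "norm \<dots> \<le> (\<Sum>d\<in>D. norm (c d - c' d))"
    by (rule order_trans[OF norm_sum]) (simp add: norm_mult)
  finally show ?thesis .
qed

lemma uniform_limit_trig_poly:
  assumes "finite D"
  shows "uniform_limit A (trig_poly D) (trig_poly D c) (at c within C)"
proof (rule uniform_limitI)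
  fix e :: real
  assume "0 < e"
  have "continuous_on UNIV (\<lambda>c'. \<Sum>d\<in>D. norm (c' d - c d))"
    by (intro continuous_intros continuous_on_product_coordinates)
  then have "isCont (\<lambda>c'. \<Sum>d\<in>D. norm (c' d - c d)) c"
    by (simp add: continuous_on_eq_continuous_at)
  then have "continuous (at c within C) (\<lambda>c'. \<Sum>d\<in>D. norm (c' d - c d))"
    by (rule continuous_at_imp_continuous_at_within)
  then have "((\<lambda>c'. \<Sum>d\<in>D. norm (c' d - c d)) \<longlongrightarrow> 0) (at c within C)"
    by (simp add: continuous_within)
  then have "\<forall>\<^sub>F c' in at c within C. (\<Sum>d\<in>D. norm (c' d - c d)) < e"
    using \<open>0 < e\<close> by (rule order_tendstoD(2))
  then show "\<forall>\<^sub>F c' in at c within C. \<forall>t\<in>A. dist (trig_poly D c' t) (trig_poly D c t) < e"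
    by eventually_elim (auto simp: dist_norm intro: le_less_trans[OF norm_trig_poly_diff_le])
qed

lemma trig_poly_shift:
  fixes k :: "int^'m"
  shows "trig_poly D c (t + s *\<^sub>R of_int_vec k) =
     (\<Sum>d\<in>D. c d * cis (2 * pi * (of_int_vec d \<bullet> t)) *
        cis (2 * pi * s) powi (\<Sum>j\<in>UNIV. k$j * d$j))"
proof -
  have "of_int_vec d \<bullet> (t + s *\<^sub>R of_int_vec k)
      = of_int_vec d \<bullet> t + of_int (\<Sum>j\<in>UNIV. k$j * d$j) * s"
    for d :: "int^'m"
    by (simp add: of_int_vec_def inner_vec_def sum.distrib sum_distrib_left algebra_simps)
  then show ?thesis
    unfolding trig_poly_def by (simp add: cis_power_int cis_mult distrib_left ac_simps)
qed

lemma trig_poly_zero_set_null: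
  fixes D :: "(int^'m) set"
  assumes "finite D" and "d0 \<in> D" and "c d0 \<noteq> 0"
  shows "{t. trig_poly D c t = 0} \<in> null_sets lborel"
proof -
  obtain k :: "int^'m" where inj: "inj_on (\<lambda>d. \<Sum>j\<in>UNIV. k$j * d$j) D"
    using ex_inj_on_int_linear_form[OF \<open>finite D\<close>] by blast
  show ?thesis
  proof (rule null_sets_lborel_of_null_line_sections[where v = "of_int_vec k"])
    fix t
    define R where "R = {w. w \<noteq> 0 \<and>
      (\<Sum>d\<in>D. c d * cis (2 * pi * (of_int_vec d \<bullet> t)) * w powi (\<Sum>j\<in>UNIV. k$j * d$j)) = 0}"
    have "finite R"
      unfolding R_def using assms inj by (intro finite_nonzero_roots_Laurent) auto
    then have "finite ((\<lambda>s. cis (2 * pi * s)) -` R \<inter> {0..<1})"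
      using inj_on_cis_2pi by (rule finite_vimage_IntI)
    moreover have "{s\<in>{0..<1}. t + s *\<^sub>R of_int_vec k \<in> {t. trig_poly D c t = 0}}
        \<subseteq> (\<lambda>s. cis (2 * pi * s)) -` R \<inter> {0..<1}"
      by (auto simp: R_def trig_poly_shift)
    ultimately show "{s\<in>{0..<1}. t + s *\<^sub>R of_int_vec k \<in> {t. trig_poly D c t = 0}}
        \<in> null_sets lborel"
      by (meson countable_finite finite_subset countable_imp_null_set_lborel)
  qed measurable
qed

lemma borel_measurable_laurent_eval [measurable]: "laurent_eval D c \<in> borel_measurable borel"
proof -
  have [measurable]: "(\<lambda>z::complex^'m. z$j) \<in> borel_measurable borel" for j
    by (intro borel_measurable_continuous_onI continuous_intros)
  show ?thesis
    unfolding laurent_eval_def power_int_def by measurable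
qed

lemma rho_neg_eq_cube:
  "rho_neg D c = measure (restrict_space lborel (cbox 0 1))
     {t \<in> space (restrict_space lborel (cbox 0 1)). Re (trig_poly D c t) < 0}"
proof -
  let ?M = "restrict_space lborel (cbox (0::real^'m) 1)"
  have [measurable]: "(\<lambda>t::real^'m. \<chi> j. cis (2 * pi * t$j)) \<in> measurable ?M borel"
    by (rule measurable_restrict_space1, simp only: measurable_lborel2)
      (intro borel_measurable_continuous_onI continuous_on_vec_lambda continuous_intros)
  have cube: "{t::real^'m. \<forall>j. t$j \<in> {0..1}} = cbox 0 1"
    by (auto simp: mem_box_cart)
  have "rho_neg D c = measure (distr ?M borel (\<lambda>t. \<chi> j. cis (2 * pi * t$j)))
      {z. Re (laurent_eval D c z) < 0}"
    unfolding rho_neg_def torus_measure_def cube by simp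
  also have "\<dots> = measure ?M {t \<in> space ?M. Re (trig_poly D c t) < 0}"
    by (subst measure_distr) (simp_all add: laurent_eval_cis vimage_def Int_def conj_commute)
  finally show ?thesis .
qed

theorem lemma2:
  fixes D :: "(int^'m) set"
  assumes "finite D" and "0 \<notin> D" and "uminus ` D = D"
  shows "continuous_on (F_D D) (rho_neg D)"
proof -
  let ?M = "restrict_space lborel (cbox (0::real^'m) 1)"
  interpret cube: finite_measure ?M
    using emeasure_lborel_cbox_finite
    by (intro finite_measureI) (simp add: space_restrict_space emeasure_restrict_space less_top)
  show ?thesis
    unfolding continuous_on_def rho_neg_eq_cube
  proof
    fix c
    assume c: "c \<in> F_D D"
    then have "(\<Sum>d\<in>D. (cmod (c d))\<^sup>2) \<noteq> 0"
      by (simp add: F_D_def)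
    then obtain d0 where "d0 \<in> D" "c d0 \<noteq> 0"
      by (rule sum.not_neutral_contains_not_neutral) simp
    then have "{t. trig_poly D c t = 0} \<in> null_sets lborel"
      using \<open>finite D\<close> by (rule trig_poly_zero_set_null[rotated])
    moreover have "{t \<in> space ?M. Re (trig_poly D c t) = 0} = cbox 0 1 \<inter> {t. trig_poly D c t = 0}"
      using Im_trig_poly[OF assms(3)] c by (auto simp: F_D_def complex_eq_iff space_restrict_space)
    ultimately have "{t \<in> space ?M. Re (trig_poly D c t) = 0} \<in> null_sets ?M"
      by (simp add: null_sets_restrict_space null_set_Int1)
    then show "((\<lambda>c'. measure ?M {t \<in> space ?M. Re (trig_poly D c' t) < 0}) \<longlongrightarrow>
        measure ?M {t \<in> space ?M. Re (trig_poly D c t) < 0}) (at c within F_D D)"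
      by (intro cube.tendsto_measure_neg_set uniform_limit_intros uniform_limit_trig_poly
          \<open>finite D\<close>) (auto simp: measurable_restrict_space1)
  qed
qed

end
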